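(* For every integer $n\geq 1$, $$\sum_{k=1}^{n}E_{2k-2}E_{2n-2k}=\frac2n\sum_{k=1}^{n}\frac{B_{2k}B_{2n-2k}}{k}\big(2^{2k}-1\big)2^{2k-1}\big(1-2^{2n-2k-1}\big)\binom{2n}{2k}.$$
   Context: $B_n$ denotes the Bernoulli numbers, defined by $\frac{x}{e^x-1}=\sum_{n\ge 0}B_n\frac{x^n}{n!}$ (so $B_0=1$). $E_n$ denotes the Euler numbers, defined by $\operatorname{sech} x=\sum_{n\ge0}E_n\frac{x^n}{n!}$ (so $E_0=1$, $E_2=-1$, $E_4=5,\dots$). *)

theory Defs
  imports "HOL-Computational_Algebra.Formal_Power_Series" Complex_Main
begin

definition bernoulli_num :: "nat \<Rightarrow> real" where
  "bernoulli_num n = fact n * fps_nth (fps_X / (fps_exp 1 - 1) :: real fps) n"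

definition euler_num :: "nat \<Rightarrow> real" where
  "euler_num n = fact n * fps_nth (inverse ((fps_exp 1 + fps_exp (-1)) / 2) :: real fps) n"

end

(*
  Let S, C, H = 1/C and T = S/C be the hyperbolic sine, cosine, secant and tangent as
  exponential generating functions, so that H is the generating function of the Euler numbers.
  For u + v = 1 the addition theorem gives T(ux) + T(vx) = S(x) H(ux) H(vx).  The coefficient
  of x^m on either side is a polynomial in u; integrating over 0 <= u <= 1 with the Beta
  integral of u^p (1-u)^q yields x S(x) P(x) = 2 L(x), where L = log cosh is the integral of T
  and (m+1)! P_m = sum_p E_p E_(m-p).  Since x/sinh x = 2 B(x) - B(2x) and
  x tanh x = x - B(2x) + B(4x) for the Bernoulli generating function B, this expresses P, and
  hence the Euler convolution, through products of Bernoulli numbers.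
*)
theory Submission
  imports Defs "HOL-Analysis.Gamma_Function"
begin

no_notation vec_nth (infixl \<open>$\<close> 90)
notation fps_nth (infixl \<open>$\<close> 75)

section \<open>Hyperbolic functions as formal power series\<close>

abbreviation fps_dilate :: "'a::comm_ring_1 \<Rightarrow> 'a fps \<Rightarrow> 'a fps" where
  "fps_dilate c f \<equiv> f oo (fps_const c * fps_X)"

definition fps_cosh :: "'a::field_char_0 \<Rightarrow> 'a fps" where
  "fps_cosh c = fps_const (1/2) * (fps_exp c + fps_exp (-c))"

definition fps_sinh :: "'a::field_char_0 \<Rightarrow> 'a fps" where
  "fps_sinh c = fps_const (1/2) * (fps_exp c - fps_exp (-c))"

definition fps_sech :: "'a::field_char_0 \<Rightarrow> 'a fps" where
  "fps_sech c = inverse (fps_cosh c)"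

definition fps_tanh :: "'a::field_char_0 \<Rightarrow> 'a fps" where
  "fps_tanh c = fps_sinh c * fps_sech c"

lemma fps_cosh_nth_0 [simp]: "fps_cosh c $ 0 = 1"
  by (simp add: fps_cosh_def)

lemma fps_cosh_mult_sech: "fps_cosh c * fps_sech c = 1"
  by (simp add: fps_sech_def inverse_mult_eq_1')

lemma fps_cosh_uminus [simp]: "fps_cosh (-c) = fps_cosh c"
  by (simp add: fps_cosh_def add.commute)

lemma fps_sinh_uminus [simp]: "fps_sinh (-c) = - fps_sinh c"
  by (simp add: fps_sinh_def algebra_simps)

lemma fps_sech_uminus [simp]: "fps_sech (-c) = fps_sech c"
  by (simp add: fps_sech_def)

lemma fps_tanh_uminus [simp]: "fps_tanh (-c) = - fps_tanh c"
  by (simp add: fps_tanh_def)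

lemma fps_cosh_compose_linear [simp]:
  "fps_dilate u (fps_cosh c) = fps_cosh (u * c)"
  by (simp add: fps_cosh_def fps_compose_add_distrib flip: fps_const_mult_apply_left)

lemma fps_sinh_compose_linear [simp]:
  "fps_dilate u (fps_sinh c) = fps_sinh (u * c)"
  by (simp add: fps_sinh_def fps_compose_sub_distrib flip: fps_const_mult_apply_left)

lemma fps_sech_compose_linear [simp]:
  "fps_dilate u (fps_sech c) = fps_sech (u * c)"
  by (simp add: fps_sech_def fps_inverse_compose)

lemma fps_tanh_compose_linear [simp]:
  "fps_dilate u (fps_tanh c) = fps_tanh (u * c)"
  by (simp add: fps_tanh_def fps_compose_mult_distrib)

lemma fps_sinh_add:
  "fps_sinh a * fps_cosh b + fps_cosh a * fps_sinh b = fps_sinh (a + b)"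
proof -
  have "fps_sinh a * fps_cosh b + fps_cosh a * fps_sinh b =
        fps_const (1/2) * fps_const (1/2) * 2 *
          (fps_exp a * fps_exp b - fps_exp (-a) * fps_exp (-b))"
    by (simp add: fps_sinh_def fps_cosh_def algebra_simps)
  also have "fps_const (1/2) * fps_const (1/2) * 2 = (fps_const (1/2) :: 'a fps)"
    by (simp add: numeral_fps_const fps_const_mult)
  finally show ?thesis
    by (simp add: fps_sinh_def add.commute flip: fps_exp_add_mult)
qed

lemma fps_tanh_add:
  "fps_tanh a + fps_tanh b = fps_sinh (a + b) * fps_sech a * fps_sech b"
proof -
  have "fps_tanh a + fps_tanh b =
        fps_sinh a * fps_sech a * (fps_cosh b * fps_sech b)
          + fps_sinh b * fps_sech b * (fps_cosh a * fps_sech a)"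
    by (simp add: fps_tanh_def fps_cosh_mult_sech)
  also have "\<dots> = (fps_sinh a * fps_cosh b + fps_cosh a * fps_sinh b) * fps_sech a * fps_sech b"
    by (simp add: algebra_simps)
  finally show ?thesis
    by (simp add: fps_sinh_add)
qed

lemma fps_nth_odd_eq_0:
  fixes f :: "'a::{idom,ring_char_0} fps"
  assumes "fps_dilate (-1) f = f" "odd n"
  shows "f $ n = 0"
  using arg_cong[OF assms(1), of "\<lambda>g. g $ n"] assms(2) by simp

lemma fps_nth_even_eq_0:
  fixes f :: "'a::{idom,ring_char_0} fps"
  assumes "fps_dilate (-1) f = - f" "even n"
  shows "f $ n = 0"
  using arg_cong[OF assms(1), of "\<lambda>g. g $ n"] assms(2) by simp

lemma fps_sech_nth_odd: "odd n \<Longrightarrow> fps_sech 1 $ n = (0::'a::field_char_0)"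
  by (rule fps_nth_odd_eq_0) simp_all

lemma fps_tanh_nth_even: "even n \<Longrightarrow> fps_tanh 1 $ n = (0::'a::field_char_0)"
  by (rule fps_nth_even_eq_0) simp_all

lemma fps_exp_double: "fps_exp (2 * c) = fps_exp c * (fps_exp c :: 'a::field_char_0 fps)"
  by (metis fps_exp_add_mult mult_2)

lemma fps_exp_neg_mult_exp: "fps_exp (-c) * fps_exp c = (1 :: 'a::field_char_0 fps)"
  by (simp flip: fps_exp_add_mult)

lemma fps_sinh_mult_exp: "2 * fps_sinh c * fps_exp c = fps_exp (2 * c) - 1"
proof -
  have "2 * fps_sinh c = fps_exp c - fps_exp (-c)"
    by (simp add: fps_sinh_def numeral_fps_const mult.assoc[symmetric])
  then have "2 * fps_sinh c * fps_exp c = fps_exp c * fps_exp c - fps_exp (-c) * fps_exp c"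
    by (simp add: left_diff_distrib)
  also have "\<dots> = fps_exp (2 * c) - 1"
    by (simp only: fps_exp_double fps_exp_neg_mult_exp)
  finally show ?thesis .
qed

lemma fps_cosh_mult_exp: "2 * fps_cosh c * fps_exp c = fps_exp (2 * c) + 1"
proof -
  have "2 * fps_cosh c = fps_exp c + fps_exp (-c)"
    by (simp add: fps_cosh_def numeral_fps_const mult.assoc[symmetric])
  then have "2 * fps_cosh c * fps_exp c = fps_exp c * fps_exp c + fps_exp (-c) * fps_exp c"
    by (simp add: distrib_right)
  also have "\<dots> = fps_exp (2 * c) + 1"
    by (simp only: fps_exp_double fps_exp_neg_mult_exp)
  finally show ?thesis .
qed

lemma fps_tanh_mult_exp: "fps_tanh c * (fps_exp (2 * c) + 1) = fps_exp (2 * c) - 1"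
proof -
  have "fps_tanh c * (fps_exp (2 * c) + 1) =
        2 * fps_sinh c * fps_exp c * (fps_cosh c * fps_sech c)"
    by (simp add: fps_tanh_def flip: fps_cosh_mult_exp)
  then show ?thesis
    by (simp add: fps_cosh_mult_sech fps_sinh_mult_exp)
qed

section \<open>The Bernoulli generating function\<close>

definition bernoulli_fps :: "'a::field_char_0 fps" where
  "bernoulli_fps = fps_X / (fps_exp 1 - 1)"

lemma bernoulli_fps_mult_exp: "bernoulli_fps * (fps_exp 1 - 1) = fps_X"
proof -
  have "subdegree (fps_exp 1 - 1 :: 'a fps) = 1"
    by (rule subdegreeI) auto
  moreover have "fps_exp 1 - 1 \<noteq> (0 :: 'a fps)"
    by (rule fps_nonzeroI[of _ 1]) simp
  ultimately have "fps_exp 1 - 1 dvd (fps_X :: 'a fps)"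
    by (simp add: fps_dvd_iff)
  then show ?thesis
    unfolding bernoulli_fps_def by (rule dvd_div_mult_self)
qed

lemma bernoulli_fps_compose_linear_mult_exp:
  "fps_dilate c bernoulli_fps * (fps_exp c - 1) = fps_const c * fps_X"
  using arg_cong[OF bernoulli_fps_mult_exp, of "fps_dilate c"]
  by (simp add: fps_compose_mult_distrib fps_compose_sub_distrib)

lemma fps_X_over_sinh:
  "(2 * bernoulli_fps - fps_dilate 2 bernoulli_fps) * fps_sinh 1 = (fps_X :: 'a::field_char_0 fps)"
  (is "?K * _ = _")
proof -
  let ?e = "fps_exp 1 :: 'a fps"
  have B1: "bernoulli_fps * (?e - 1) = fps_X"
    by (rule bernoulli_fps_mult_exp)
  have B2: "fps_dilate 2 bernoulli_fps * (fps_exp 2 - 1) = 2 * (fps_X :: 'a fps)"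
    using bernoulli_fps_compose_linear_mult_exp[of "2::'a"] by (simp add: numeral_fps_const)
  have E2: "fps_exp 2 - 1 = (?e - 1) * (?e + 1)"
    using fps_exp_double[of "1::'a"] by (simp add: algebra_simps)
  have "?K * fps_sinh 1 * (2 * ?e) = ?K * (2 * fps_sinh 1 * ?e)"
    by (simp only: mult_ac)
  also have "\<dots> = ?K * (fps_exp 2 - 1)"
    using fps_sinh_mult_exp[of "1::'a"] by simp
  also have "\<dots> = 2 * bernoulli_fps * (fps_exp 2 - 1)
                    - fps_dilate 2 bernoulli_fps * (fps_exp 2 - 1)"
    by (rule left_diff_distrib)
  also have "\<dots> = 2 * (bernoulli_fps * (?e - 1)) * (?e + 1) - 2 * fps_X"
    unfolding B2 unfolding E2 by (simp only: mult_ac)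
  also have "\<dots> = fps_X * (2 * ?e)"
    unfolding B1 by (simp add: algebra_simps)
  finally show ?thesis
    by (rule mult_right_cancel[THEN iffD1, rotated]) (auto intro: fps_nonzeroI[of _ 0])
qed

lemma fps_X_mult_tanh:
  "fps_X * fps_tanh 1 =
     fps_X - (fps_dilate 2 bernoulli_fps - fps_dilate 4 bernoulli_fps :: 'a::field_char_0 fps)"
proof -
  let ?e = "fps_exp 2 :: 'a fps"
    and ?D = "fps_dilate 2 bernoulli_fps - fps_dilate 4 bernoulli_fps :: 'a fps"
  have B2: "fps_dilate 2 bernoulli_fps * (?e - 1) = 2 * fps_X"
    using bernoulli_fps_compose_linear_mult_exp[of "2::'a"] by (simp add: numeral_fps_const)
  have B4: "fps_dilate 4 bernoulli_fps * ((?e - 1) * (?e + 1)) = 4 * fps_X"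
  proof -
    have "(?e - 1) * (?e + 1) = fps_exp 4 - 1"
      using fps_exp_double[of "2::'a"] by (simp add: algebra_simps)
    then show ?thesis
      using bernoulli_fps_compose_linear_mult_exp[of "4::'a"] by (simp add: numeral_fps_const)
  qed
  have "?D * (?e + 1) * (?e - 1) = fps_dilate 2 bernoulli_fps * (?e - 1) * (?e + 1)
          - fps_dilate 4 bernoulli_fps * ((?e - 1) * (?e + 1))"
    by (simp add: algebra_simps)
  also have "\<dots> = 2 * fps_X * (?e - 1)"
    unfolding B2 B4 by (simp add: algebra_simps)
  finally have D: "?D * (?e + 1) = 2 * fps_X"
    by (rule mult_right_cancel[THEN iffD1, rotated]) (auto intro: fps_nonzeroI[of _ 1])
  have "fps_X * fps_tanh 1 * (?e + 1) = fps_X * (?e - 1)"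
    using fps_tanh_mult_exp[of "1::'a"] by (simp add: mult.assoc)
  also have "\<dots> = fps_X * (?e + 1) - 2 * fps_X"
    by (simp add: algebra_simps)
  also have "\<dots> = (fps_X - ?D) * (?e + 1)"
    by (simp only: left_diff_distrib[of fps_X ?D] D)
  finally show ?thesis
    by (rule mult_right_cancel[THEN iffD1, rotated]) (rule fps_nonzeroI[of _ 0], simp)
qed

section \<open>Integrating an identity between dilations\<close>

lemma has_integral_power_mult_power:
  "((\<lambda>u::real. u ^ p * (1 - u) ^ q) has_integral (fact p * fact q / fact (p + q + 1))) {0..1}"
proof -
  have Beta: "Beta (real (p + 1)) (real (q + 1)) = fact p * fact q / fact (p + q + 1)"
    using Gamma_fact[of p, where 'a=real] Gamma_fact[of q, where 'a=real]
      Gamma_fact[of "p + q + 1", where 'a=real]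
    by (simp add: Beta_def add_ac)
  have "((\<lambda>u. u powr (real (p + 1) - 1) * (1 - u) powr (real (q + 1) - 1)) has_integral
          Beta (real (p + 1)) (real (q + 1))) {0..1}"
    by (rule has_integral_Beta_real) auto
  then have "((\<lambda>u. u powr real p * (1 - u) powr real q) has_integral
          (fact p * fact q / fact (p + q + 1))) {0<..<1}"
    unfolding Beta by (simp add: has_integral_Icc_iff_Ioo)
  then have "((\<lambda>u::real. u ^ p * (1 - u) ^ q) has_integral
          (fact p * fact q / fact (p + q + 1))) {0<..<1}"
    by (rule has_integral_eq[rotated]) (simp add: powr_realpow)
  then show ?thesis
    by (simp add: has_integral_Icc_iff_Ioo)
qed

(* The coefficients of the integral of g(ux) h((1-u)x) over 0 <= u <= 1. *)
definition fps_beta_product :: "'a::field_char_0 fps \<Rightarrow> 'a fps \<Rightarrow> 'a fps" where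
  "fps_beta_product g h =
     Abs_fps (\<lambda>m. \<Sum>p=0..m. g $ p * h $ (m - p) * (fact p * fact (m - p) / fact (m + 1)))"

lemma has_integral_dilate_mult_nth:
  "((\<lambda>u::real. (fps_dilate u g * fps_dilate (1 - u) h) $ m)
      has_integral fps_beta_product g h $ m) {0..1}"
proof -
  have "((\<lambda>u::real. \<Sum>p=0..m. g $ p * h $ (m - p) * (u ^ p * (1 - u) ^ (m - p))) has_integral
          (\<Sum>p=0..m. g $ p * h $ (m - p) * (fact p * fact (m - p) / fact (p + (m - p) + 1)))) {0..1}"
    by (intro has_integral_sum has_integral_mult_right has_integral_power_mult_power) simp
  moreover have "(\<Sum>p=0..m. g $ p * h $ (m - p) * (fact p * fact (m - p) / fact (p + (m - p) + 1)))
      = fps_beta_product g h $ m"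
    by (simp add: fps_beta_product_def)
  ultimately show ?thesis
    unfolding fps_mult_nth fps_nth_compose_linear by (simp add: mult_ac)
qed

lemma has_integral_dilate_nth:
  "((\<lambda>u::real. fps_dilate u f $ m) has_integral f $ m / (m + 1)) {0..1}"
  and has_integral_dilate_complement_nth:
  "((\<lambda>u::real. fps_dilate (1 - u) f $ m) has_integral f $ m / (m + 1)) {0..1}"
  using has_integral_mult_right[OF has_integral_power_mult_power[of m 0], of "f $ m"]
    has_integral_mult_right[OF has_integral_power_mult_power[of 0 m], of "f $ m"]
  unfolding fps_nth_compose_linear by (simp_all add: mult_ac)

lemma fps_X_mult_beta_product:
  fixes f k g h s :: "real fps"
  assumes "\<And>u. u \<in> {0..1} \<Longrightarrow>
    fps_dilate u f + fps_dilate (1 - u) k = s * (fps_dilate u g * fps_dilate (1 - u) h)"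
  shows "fps_X * (s * fps_beta_product g h) = fps_integral0 f + fps_integral0 k"
proof (rule fps_ext)
  fix n
  show "(fps_X * (s * fps_beta_product g h)) $ n = (fps_integral0 f + fps_integral0 k) $ n"
  proof (cases n)
    case (Suc m)
    have "((\<lambda>u. (fps_dilate u f + fps_dilate (1 - u) k) $ m) has_integral
            f $ m / (m + 1) + k $ m / (m + 1)) {0..1}"
      unfolding fps_add_nth
      by (intro has_integral_add has_integral_dilate_nth has_integral_dilate_complement_nth)
    then have "((\<lambda>u. (s * (fps_dilate u g * fps_dilate (1 - u) h)) $ m) has_integral
            f $ m / (m + 1) + k $ m / (m + 1)) {0..1}"
      by (rule has_integral_eq[rotated]) (simp only: assms)
    moreover have "((\<lambda>u. (s * (fps_dilate u g * fps_dilate (1 - u) h)) $ m) has_integral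
            (s * fps_beta_product g h) $ m) {0..1}"
      unfolding fps_mult_nth[of s]
      by (intro has_integral_sum has_integral_mult_right has_integral_dilate_mult_nth) simp
    ultimately have "(s * fps_beta_product g h) $ m = f $ m / (m + 1) + k $ m / (m + 1)"
      by (rule has_integral_unique[rotated])
    then show ?thesis
      using Suc by (simp add: divide_inverse mult.commute)
  qed simp
qed

lemma fps_X_power2_mult_beta_product_sech:
  "fps_X\<^sup>2 * fps_beta_product (fps_sech 1) (fps_sech 1) =
     2 * fps_integral0 (fps_tanh 1) * (2 * bernoulli_fps - fps_dilate 2 bernoulli_fps :: real fps)"
proof -
  let ?P = "fps_beta_product (fps_sech 1) (fps_sech (1::real))"
    and ?K = "2 * bernoulli_fps - fps_dilate 2 bernoulli_fps :: real fps"
    and ?L = "fps_integral0 (fps_tanh (1::real))"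
  have "fps_X * (fps_sinh 1 * ?P) = ?L + ?L"
    by (rule fps_X_mult_beta_product) (simp add: fps_tanh_add)
  then have SP: "fps_X * (fps_sinh 1 * ?P) = 2 * ?L"
    by (simp only: mult_2)
  have "fps_X\<^sup>2 * ?P = fps_X * (?K * fps_sinh 1 * ?P)"
    by (simp only: fps_X_over_sinh power2_eq_square mult.assoc)
  also have "\<dots> = ?K * (fps_X * (fps_sinh 1 * ?P))"
    by (simp only: mult_ac)
  also have "\<dots> = 2 * ?L * ?K"
    by (simp only: SP mult_ac)
  finally show ?thesis .
qed

section \<open>Euler and Bernoulli numbers\<close>

lemma euler_num_conv_fps_sech: "euler_num n = fact n * fps_sech 1 $ n"
proof -
  have "(fps_exp 1 + fps_exp (-1)) / 2 = (fps_cosh 1 :: real fps)"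
    by (simp add: fps_cosh_def numeral_fps_const fps_divide_unit fps_const_inverse mult.commute)
  then show ?thesis
    by (simp add: euler_num_def fps_sech_def)
qed

lemma bernoulli_fps_nth: "bernoulli_fps $ n = bernoulli_num n / fact n"
  by (simp add: bernoulli_num_def bernoulli_fps_def)

lemma euler_num_odd: "odd n \<Longrightarrow> euler_num n = 0"
  by (simp add: euler_num_conv_fps_sech fps_sech_nth_odd)

lemma fps_tanh_nth_bernoulli_num:
  assumes "k \<ge> 1"
  shows "(fps_tanh 1 :: real fps) $ (2 * k - 1) =
           2 ^ (2 * k) * (2 ^ (2 * k) - 1) * bernoulli_num (2 * k) / fact (2 * k)"
proof -
  have "(fps_tanh 1 :: real fps) $ (2 * k - 1) = (fps_X * fps_tanh 1) $ (2 * k)"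
    using assms by (cases "2 * k") auto
  also have "\<dots> = (4 ^ (2 * k) - 2 ^ (2 * k)) * (bernoulli_num (2 * k) / fact (2 * k))"
    using assms unfolding fps_X_mult_tanh fps_sub_nth fps_nth_compose_linear
    by (simp add: bernoulli_fps_nth algebra_simps)
  finally show ?thesis
    by (simp add: algebra_simps diff_divide_distrib flip: power_mult_distrib)
qed

lemma fps_X_over_sinh_nth:
  "(2 * bernoulli_fps - fps_dilate 2 bernoulli_fps) $ n = (2 - 2 ^ n) * bernoulli_num n / fact n"
  unfolding fps_sub_nth fps_nth_compose_linear
  by (simp add: bernoulli_fps_nth numeral_fps_const algebra_simps diff_divide_distrib)

lemma sum_atLeast0_atMost_double_odd_eq_0:
  fixes f :: "nat \<Rightarrow> 'a::comm_monoid_add"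
  assumes "\<And>i. odd i \<Longrightarrow> f i = 0"
  shows "(\<Sum>i=0..2*m. f i) = (\<Sum>k=0..m. f (2 * k))"
proof -
  have "(\<Sum>k=0..m. f (2 * k)) = sum f ((\<lambda>k. 2 * k) ` {0..m})"
    by (simp add: sum.reindex inj_on_def)
  also have "\<dots> = (\<Sum>i=0..2*m. f i)"
  proof (rule sum.mono_neutral_left)
    show "\<forall>i\<in>{0..2*m} - (\<lambda>k. 2 * k) ` {0..m}. f i = 0"
    proof
      fix i assume "i \<in> {0..2*m} - (\<lambda>k. 2 * k) ` {0..m}"
      then have "odd i" by (auto elim!: evenE)
      then show "f i = 0" by (rule assms)
    qed
  qed auto
  finally show ?thesis ..
qed

lemma sum_euler_num_convolution:
  "(\<Sum>j=0..m. euler_num j * euler_num (m - j)) =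
     fact (m + 1) * fps_beta_product (fps_sech 1) (fps_sech 1) $ m"
  by (simp add: fps_beta_product_def euler_num_conv_fps_sech sum_distrib_left mult_ac)

lemma fps_beta_product_sech_nth_even:
  "fps_beta_product (fps_sech 1) (fps_sech 1) $ (2 * m) =
     2 * (\<Sum>k=1..m+1. fps_integral0 (fps_tanh 1) $ (2 * k) *
            (2 * bernoulli_fps - fps_dilate 2 bernoulli_fps :: real fps) $ (2 * (m + 1) - 2 * k))"
  (is "_ = 2 * (\<Sum>k=1..m+1. ?L $ (2 * k) * ?K $ (2 * (m + 1) - 2 * k))")
proof -
  have L_odd: "?L $ i * ?K $ (2 * (m + 1) - i) = 0" if "odd i" for i
    using that by (cases i) (auto simp: fps_tanh_nth_even)
  have "fps_beta_product (fps_sech 1) (fps_sech 1) $ (2 * m) =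
        (fps_X\<^sup>2 * fps_beta_product (fps_sech 1) (fps_sech (1::real))) $ (2 * (m + 1))"
    by (simp add: fps_X_power_mult_nth)
  also have "\<dots> = 2 * (\<Sum>i=0..2*(m+1). ?L $ i * ?K $ (2 * (m + 1) - i))"
  proof -
    have two: "(2 * f) $ j = 2 * f $ j" for f :: "real fps" and j
      by (simp add: numeral_fps_const)
    show ?thesis
      unfolding fps_X_power2_mult_beta_product_sech mult.assoc[of 2] two by (simp only: fps_mult_nth)
  qed
  also have "\<dots> = 2 * (\<Sum>k=0..m+1. ?L $ (2 * k) * ?K $ (2 * (m + 1) - 2 * k))"
    by (subst sum_atLeast0_atMost_double_odd_eq_0) (use L_odd in auto)
  also have "\<dots> = 2 * (\<Sum>k=1..m+1. ?L $ (2 * k) * ?K $ (2 * (m + 1) - 2 * k))"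
    by (simp add: sum.atLeast_Suc_atMost)
  finally show ?thesis .
qed

lemma bernoulli_summand_conv_fps:
  assumes "1 \<le> k" "k \<le> n"
  shows "2 / real n * (bernoulli_num (2*k) * bernoulli_num (2*n-2*k) / real k
            * (2 ^ (2*k) - 1) * 2 powi (int (2*k) - 1)
            * (1 - 2 powi (int (2*n-2*k) - 1)) * real (2*n choose 2*k)) =
         2 * fact (2 * n - 1) * (fps_integral0 (fps_tanh 1) $ (2 * k) *
            (2 * bernoulli_fps - fps_dilate 2 bernoulli_fps :: real fps) $ (2 * n - 2 * k))"
proof -
  define A where "A = (2::real) ^ (2 * k)"
  define R where "R = (2::real) ^ (2 * n - 2 * k)"
  have powi: "(2::real) powi (int j - 1) = 2 ^ j / 2" for j
    by (simp add: power_int_diff)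
  have "fps_integral0 (fps_tanh 1) $ (2 * k) = fps_tanh 1 $ (2 * k - 1) / (2 * k)"
    using assms by (cases "2 * k") (auto simp: divide_inverse mult.commute)
  then have L: "fps_integral0 (fps_tanh 1) $ (2 * k) =
      A * (A - 1) * bernoulli_num (2 * k) / (fact (2 * k) * (2 * k))"
    using fps_tanh_nth_bernoulli_num[OF assms(1)] by (simp add: A_def)
  have K: "(2 * bernoulli_fps - fps_dilate 2 bernoulli_fps :: real fps) $ (2 * n - 2 * k) =
      (2 - R) * bernoulli_num (2 * n - 2 * k) / fact (2 * n - 2 * k)"
    by (simp only: fps_X_over_sinh_nth R_def)
  have "real (2 * n choose 2 * k) = fact (2 * n) / (fact (2 * k) * fact (2 * n - 2 * k))"
    using assms by (simp add: binomial_fact)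
  also have "fact (2 * n) = 2 * real n * fact (2 * n - 1)"
    using assms fact_reduce[of "2 * n"] by simp
  finally have C: "real (2 * n choose 2 * k) =
      2 * real n * fact (2 * n - 1) / (fact (2 * k) * fact (2 * n - 2 * k))" .
  show ?thesis
    unfolding L K C powi A_def[symmetric] R_def[symmetric]
    using assms by (simp add: field_simps)
qed

theorem mainTheorem13:
  fixes n :: nat
  assumes "n \<ge> 1"
  shows "(\<Sum>k=1..n. euler_num (2*k-2) * euler_num (2*n-2*k)) =
         2 / real n * (\<Sum>k=1..n. bernoulli_num (2*k) * bernoulli_num (2*n-2*k) / real k
            * (2 ^ (2*k) - 1) * 2 powi (int (2*k) - 1)
            * (1 - 2 powi (int (2*n-2*k) - 1)) * real (2*n choose 2*k))"
  (is "_ = ?rhs")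
proof -
  let ?L = "fps_integral0 (fps_tanh 1)"
    and ?K = "2 * bernoulli_fps - fps_dilate 2 bernoulli_fps :: real fps"
  obtain m where n: "n = Suc m"
    using assms by (cases n) auto
  have "(\<Sum>k=1..n. euler_num (2*k-2) * euler_num (2*n-2*k)) =
        (\<Sum>k=0..m. euler_num (2*k) * euler_num (2*m-2*k))"
    unfolding n One_nat_def sum.shift_bounds_cl_Suc_ivl by simp
  also have "\<dots> = (\<Sum>j=0..2*m. euler_num j * euler_num (2*m-j))"
    by (rule sum_atLeast0_atMost_double_odd_eq_0[symmetric]) (simp add: euler_num_odd)
  also have "\<dots> = fact (2*m+1) * fps_beta_product (fps_sech 1) (fps_sech 1) $ (2*m)"
    by (rule sum_euler_num_convolution)
  also have "\<dots> = (\<Sum>k=1..n. 2 * fact (2*n-1) * (?L $ (2*k) * ?K $ (2*n-2*k)))"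
    unfolding fps_beta_product_sech_nth_even n sum_distrib_left by (simp add: mult_ac)
  also have "\<dots> = ?rhs"
    unfolding sum_distrib_left by (intro sum.cong refl bernoulli_summand_conv_fps[symmetric]) auto
  finally show ?thesis .
qed

end
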